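(* For $n \in \mathbb{N}_0$ let $\kappa(n)$ denote the maximal number of consecutive $1$s in the binary expansion of $n$ (so $\kappa(0)=0$, and e.g. $\kappa(1234)=\kappa([10011010010]_2)=2$). Define $f\colon\mathbb{N}_0\to\{0,1\}$ by $f(n)=1$ if $\kappa(n)$ is odd and $f(n)=0$ otherwise. Then $f$ is asymptotically $2$-automatic but there is no $2$-automatic sequence $\tilde f\colon\mathbb{N}_0\to\{0,1\}$ with $f\simeq\tilde f$.
   Context: $\mathbb{N}_0=\{0,1,2,\dots\}$. A property holds for almost all $n\in\mathbb{N}_0$ if the set of $n$ where it fails has upper density $\limsup_{N\to\infty}|\cdot\cap\{0,\dots,N-1\}|/N$ equal to $0$. Sequences $f,g$ are asymptotically equal, $f\simeq g$, if $f(n)=g(n)$ for almost all $n$. The $k$-kernel of $f$ is $\mathcal{N}_k(f) = \{ n \mapsto f(k^\alpha n + r) : \alpha, r \in \mathbb{N}_0,\ r < k^\alpha\}$; $f$ is $k$-automatic if $\mathcal{N}_k(f)$ is finite, and asymptotically $k$-automatic if $\mathcal{N}_k(f)/{\simeq}$ is finite. *)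

theory Defs
  imports Main "HOL-Library.Liminf_Limsup" "HOL-Library.Extended_Real"
begin

definition upper_density_zero :: "nat set \<Rightarrow> bool" where
  "upper_density_zero A \<longleftrightarrow>
     limsup (\<lambda>N::nat. ereal (real (card (A \<inter> {..<N})) / real N)) = 0"

definition almost_all :: "(nat \<Rightarrow> bool) \<Rightarrow> bool" where
  "almost_all P \<longleftrightarrow> upper_density_zero {n. \<not> P n}"

definition asymp_eq :: "(nat \<Rightarrow> 'a) \<Rightarrow> (nat \<Rightarrow> 'a) \<Rightarrow> bool" where
  "asymp_eq f g \<longleftrightarrow> almost_all (\<lambda>n. f n = g n)"

definition kernel :: "nat \<Rightarrow> (nat \<Rightarrow> 'a) \<Rightarrow> (nat \<Rightarrow> 'a) set" where
  "kernel k f = {(\<lambda>n. f (k ^ a * n + r)) | a r. r < k ^ a}"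

definition automatic :: "nat \<Rightarrow> (nat \<Rightarrow> 'a) \<Rightarrow> bool" where
  "automatic k f \<longleftrightarrow> finite (kernel k f)"

definition asymp_automatic :: "nat \<Rightarrow> (nat \<Rightarrow> 'a) \<Rightarrow> bool" where
  "asymp_automatic k f \<longleftrightarrow>
     finite (kernel k f // {(g, h). asymp_eq g h})"

definition kappa :: "nat \<Rightarrow> nat" where
  "kappa n = Max {l. \<exists>i. \<forall>j<l. bit n (i + j)}"

definition kappa_parity :: "nat \<Rightarrow> nat" where
  "kappa_parity n = (if odd (kappa n) then 1 else 0)"

end

theory Submission
  imports Defs
begin

text \<open>
  Appending a block r < 2^p below n does not change kappa n if n has a zero bit at a position t
  with p + t <= kappa n: that zero separates the low part, whose runs are at most p + t long, from
  the rest of n. So kappa (2^p n + r) = kappa n unless the lowest t bits of n are all ones or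
  kappa n < p + t. The first set has density 2^-t, the second density zero (its members avoid an
  all-ones block in each of many aligned positions), so every kernel element of kappa_parity is
  asymptotically equal to kappa_parity.

  If an automatic g were asymptotically equal to kappa_parity, its finitely many kernel elements
  would all agree with kappa_parity off one sparse set E: g (2^a n + r) = kappa_parity n for n
  outside E. Neither parity class of kappa is sparse, because inserting a 1 right after the first
  longest run is an injection of linear growth that raises kappa by one; so there are n0, n1
  outside E with kappa of different parity. Appending to both a suffix that ends in more ones
  than kappa n0 and kappa n1 yields numbers with equal kappa but different values of g, and the
  2^b suffixes below 2^(b + K) make the set where kappa_parity and g differ non-sparse.
\<close>

section \<open>Sets of upper density zero\<close>

definition eventually_density_less :: "nat set \<Rightarrow> real \<Rightarrow> bool" where
  "eventually_density_less A e \<longleftrightarrow>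
     (\<forall>\<^sub>F N in sequentially. real (card (A \<inter> {..<N})) < e * real N)"

lemma upper_density_zero_iff:
  "upper_density_zero A \<longleftrightarrow> (\<forall>e>0. eventually_density_less A e)"
proof -
  define d where "d N = real (card (A \<inter> {..<N})) / real N" for N
  have "0 \<le> limsup (\<lambda>N. ereal (d N))"
    by (rule le_Limsup) (auto simp: d_def)
  then have "upper_density_zero A \<longleftrightarrow> limsup (\<lambda>N. ereal (d N)) \<le> 0"
    unfolding upper_density_zero_def d_def by auto
  also have "\<dots> \<longleftrightarrow> (\<forall>y>0. \<forall>\<^sub>F N in sequentially. ereal (d N) < y)"
    by (rule Limsup_le_iff)
  also have "\<dots> \<longleftrightarrow> (\<forall>e>0. \<forall>\<^sub>F N in sequentially. d N < e)"
  proof safe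
    fix e :: real assume "\<forall>y>0. \<forall>\<^sub>F N in sequentially. ereal (d N) < y" "0 < e"
    moreover have "ereal e > 0" using \<open>0 < e\<close> by simp
    ultimately have "\<forall>\<^sub>F N in sequentially. ereal (d N) < ereal e" by blast
    then show "\<forall>\<^sub>F N in sequentially. d N < e" by simp
  next
    fix y :: ereal assume "\<forall>e>0. \<forall>\<^sub>F N in sequentially. d N < e" "0 < y"
    then show "\<forall>\<^sub>F N in sequentially. ereal (d N) < y"
      by (cases y) (auto elim: eventually_mono)
  qed
  also have "\<dots> \<longleftrightarrow> (\<forall>e>0. eventually_density_less A e)"
    unfolding eventually_density_less_def
    by (intro all_cong1 imp_cong refl eventually_cong[OF eventually_gt_at_top[of 0]])
      (simp add: d_def divide_less_eq)
  finally show ?thesis .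
qed

lemma eventually_density_less_subset:
  assumes "A \<subseteq> B" "eventually_density_less B e"
  shows "eventually_density_less A e"
  using assms(2) unfolding eventually_density_less_def
proof eventually_elim
  case (elim N)
  have "card (A \<inter> {..<N}) \<le> card (B \<inter> {..<N})"
    using assms(1) by (intro card_mono) auto
  with elim show ?case
    by (meson of_nat_le_iff order_le_less_trans)
qed

lemma eventually_density_less_Un:
  assumes "eventually_density_less A e" "eventually_density_less B e'"
  shows "eventually_density_less (A \<union> B) (e + e')"
  using assms unfolding eventually_density_less_def
proof eventually_elim
  case (elim N)
  have "card ((A \<union> B) \<inter> {..<N}) \<le> card (A \<inter> {..<N}) + card (B \<inter> {..<N})"
    by (metis Int_Un_distrib2 card_Un_le)
  then show ?case using elim by (simp add: distrib_right)
qed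

lemma eventually_density_less_periodic:
  assumes "0 < P" "finite R" "A \<subseteq> {n. n mod P \<in> R}" "real (card R) / real P < e"
  shows "eventually_density_less A e"
proof -
  define d where "d = e - real (card R) / real P"
  have "d > 0" using assms(4) by (simp add: d_def)
  have count: "card (A \<inter> {..<N}) \<le> (N div P + 1) * card R" for N
  proof -
    have "A \<inter> {..<N} \<subseteq> (\<lambda>(q, r). q * P + r) ` ({..N div P} \<times> R)"
    proof
      fix n assume n: "n \<in> A \<inter> {..<N}"
      then have "(n div P, n mod P) \<in> {..N div P} \<times> R"
        using assms(3) by (auto intro: div_le_mono)
      then show "n \<in> (\<lambda>(q, r). q * P + r) ` ({..N div P} \<times> R)"
        by (rule rev_image_eqI) simp
    qed
    then have "card (A \<inter> {..<N}) \<le> card ((\<lambda>(q, r). q * P + r) ` ({..N div P} \<times> R))"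
      using assms(2) by (intro card_mono) auto
    also have "\<dots> \<le> card ({..N div P} \<times> R)"
      by (rule card_image_le) (use assms(2) in auto)
    finally show ?thesis by (simp add: card_cartesian_product)
  qed
  show ?thesis
    unfolding eventually_density_less_def eventually_sequentially
  proof (intro exI allI impI)
    fix N assume N: "nat \<lceil>real (card R) / d\<rceil> + 1 \<le> N"
    then have "real (card R) / d < real N" by linarith
    then have "real (card R) < d * real N"
      using \<open>d > 0\<close> by (simp add: pos_divide_less_eq mult.commute)
    have "real (N div P) \<le> real N / real P"
      using assms(1) by (simp add: pos_le_divide_eq flip: of_nat_mult)
    then have "real (N div P) * real (card R) \<le> real N / real P * real (card R)"
      by (rule mult_right_mono) simp
    moreover have "real (card (A \<inter> {..<N})) \<le> real (N div P) * real (card R) + real (card R)"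
      using count[of N] by (simp add: algebra_simps flip: of_nat_mult of_nat_add)
    ultimately show "real (card (A \<inter> {..<N})) < e * real N"
      using \<open>real (card R) < d * real N\<close> by (simp add: d_def algebra_simps)
  qed
qed

lemma upper_density_zero_subset:
  "A \<subseteq> B \<Longrightarrow> upper_density_zero B \<Longrightarrow> upper_density_zero A"
  unfolding upper_density_zero_iff using eventually_density_less_subset by blast

lemma upper_density_zero_Un:
  assumes "upper_density_zero A" "upper_density_zero B"
  shows "upper_density_zero (A \<union> B)"
  unfolding upper_density_zero_iff
proof (intro allI impI)
  fix e :: real assume "e > 0"
  then have "eventually_density_less (A \<union> B) (e / 2 + e / 2)"
    using assms by (intro eventually_density_less_Un) (auto simp: upper_density_zero_iff)
  then show "eventually_density_less (A \<union> B) e" by simp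
qed

lemma upper_density_zero_UN:
  "finite I \<Longrightarrow> (\<And>i. i \<in> I \<Longrightarrow> upper_density_zero (A i)) \<Longrightarrow> upper_density_zero (\<Union>i\<in>I. A i)"
proof (induction I rule: finite_induct)
  case empty
  then show ?case
    by (auto simp: upper_density_zero_iff eventually_density_less_def
        intro: eventually_mono[OF eventually_gt_at_top[of 0]])
next
  case (insert i I)
  then show ?case by (simp add: upper_density_zero_Un)
qed

lemma not_upper_density_zero_UNIV: "\<not> upper_density_zero UNIV"
proof
  assume "upper_density_zero UNIV"
  then have "\<forall>\<^sub>F N in sequentially. real (card (UNIV \<inter> {..<N})) < 1 * real N"
    unfolding upper_density_zero_iff eventually_density_less_def by (meson zero_less_one)
  then show False by simp
qed

lemma upper_density_zero_vimage:
  assumes "inj f" "\<And>n. f n < c * Suc n" "upper_density_zero A"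
  shows "upper_density_zero (f -` A)"
  unfolding upper_density_zero_iff
proof (intro allI impI)
  fix e :: real assume "e > 0"
  have "c > 0" using assms(2)[of 0] by simp
  then have "eventually_density_less A (e / c)"
    using assms(3) \<open>e > 0\<close> by (simp add: upper_density_zero_iff)
  then obtain N0 where N0: "\<And>N. N0 \<le> N \<Longrightarrow> real (card (A \<inter> {..<N})) < e / c * real N"
    unfolding eventually_density_less_def eventually_sequentially by blast
  show "eventually_density_less (f -` A) e"
    unfolding eventually_density_less_def eventually_sequentially
  proof (intro exI allI impI)
    fix N assume "N0 \<le> N"
    have "card (f -` A \<inter> {..<N}) = card (f ` (f -` A \<inter> {..<N}))"
      using assms(1) by (simp add: card_image inj_on_subset)
    also have "\<dots> \<le> card (A \<inter> {..<c * N})"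
    proof (rule card_mono)
      have "f n < c * N" if "n < N" for n
        using assms(2)[of n] mult_le_mono2[OF Suc_leI[OF that], of c] by linarith
      then show "f ` (f -` A \<inter> {..<N}) \<subseteq> A \<inter> {..<c * N}"
        by auto
    qed simp
    finally have "real (card (f -` A \<inter> {..<N})) \<le> real (card (A \<inter> {..<c * N}))"
      by simp
    also have "\<dots> < e / c * real (c * N)"
      using \<open>c > 0\<close> \<open>N0 \<le> N\<close> by (intro N0) (simp add: order_trans)
    also have "\<dots> = e * real N"
      using \<open>c > 0\<close> by simp
    finally show "real (card (f -` A \<inter> {..<N})) < e * real N" .
  qed
qed

lemma not_upper_density_zero_if_frequently_dense:
  assumes "\<And>m. \<exists>n\<ge>m. n \<le> card (A \<inter> {..<c * n})"
  shows "\<not> upper_density_zero A"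
proof
  assume "upper_density_zero A"
  have "c > 0"
    using assms[of 1] by (auto intro: Nat.gr0I)
  then have "eventually_density_less A (1 / c)"
    using \<open>upper_density_zero A\<close> by (simp add: upper_density_zero_iff)
  then obtain N0 where N0: "\<And>N. N0 \<le> N \<Longrightarrow> real (card (A \<inter> {..<N})) < 1 / c * real N"
    unfolding eventually_density_less_def eventually_sequentially by blast
  obtain n where "N0 \<le> n" "n \<le> card (A \<inter> {..<c * n})"
    using assms by blast
  moreover have "real (card (A \<inter> {..<c * n})) < real n"
    using N0[of "c * n"] \<open>c > 0\<close> \<open>N0 \<le> n\<close> by (simp add: order_trans)
  ultimately show False by simp
qed

section \<open>Asymptotic equality and kernels\<close>

lemma asymp_eq_iff: "asymp_eq f g \<longleftrightarrow> upper_density_zero {n. f n \<noteq> g n}"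
  by (simp add: asymp_eq_def almost_all_def)

lemma asymp_eq_refl: "asymp_eq f f"
  unfolding asymp_eq_iff using upper_density_zero_UN[of "{}"] by simp

lemma asymp_eq_sym: "asymp_eq f g \<Longrightarrow> asymp_eq g f"
  unfolding asymp_eq_iff by (simp add: eq_commute)

lemma asymp_eq_trans:
  assumes "asymp_eq f g" "asymp_eq g h"
  shows "asymp_eq f h"
proof -
  have "{n. f n \<noteq> h n} \<subseteq> {n. f n \<noteq> g n} \<union> {n. g n \<noteq> h n}"
    by auto
  then show ?thesis
    using assms unfolding asymp_eq_iff by (metis upper_density_zero_Un upper_density_zero_subset)
qed

lemma equiv_asymp_eq: "equiv UNIV {(f, g). asymp_eq f g}"
  by (auto intro!: equivI refl_onI symI transI
      intro: asymp_eq_refl asymp_eq_sym asymp_eq_trans)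

lemma asymp_eq_comp:
  assumes "inj \<phi>" "\<And>n. \<phi> n < c * Suc n" "asymp_eq f g"
  shows "asymp_eq (f \<circ> \<phi>) (g \<circ> \<phi>)"
  using upper_density_zero_vimage[OF assms(1,2), of "{n. f n \<noteq> g n}"] assms(3)
  by (simp add: asymp_eq_iff vimage_def)

lemma asymp_automatic_if_kernel_asymp_eq:
  assumes "\<And>h. h \<in> kernel k f \<Longrightarrow> asymp_eq h f"
  shows "asymp_automatic k f"
proof -
  let ?R = "{(g, h). asymp_eq g h}"
  have "kernel k f // ?R \<subseteq> {?R `` {f}}"
    using assms equiv_class_eq[OF equiv_asymp_eq] by (auto simp: quotient_def)
  then show ?thesis
    unfolding asymp_automatic_def by (rule finite_subset) simp
qed

lemma automatic_agrees_outside_sparse_set: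
  assumes "automatic k g" "asymp_eq f g" "\<And>h. h \<in> kernel k f \<Longrightarrow> asymp_eq h f"
  obtains E where "upper_density_zero E"
    "\<And>n a r. n \<notin> E \<Longrightarrow> r < k ^ a \<Longrightarrow> g (k ^ a * n + r) = f n"
proof
  let ?E = "\<Union>h\<in>kernel k g. {n. h n \<noteq> f n}"
  show "upper_density_zero ?E"
  proof (rule upper_density_zero_UN)
    show "finite (kernel k g)"
      using assms(1) unfolding automatic_def .
  next
    fix h assume "h \<in> kernel k g"
    then obtain a r where r: "r < k ^ a" and h: "h = (\<lambda>n. g (k ^ a * n + r))"
      unfolding kernel_def by blast
    define \<phi> where "\<phi> n = k ^ a * n + r" for n
    have "0 < k ^ a"
      using r by linarith
    then have "inj \<phi>" "\<And>n. \<phi> n < k ^ a * Suc n"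
      using r by (auto simp: \<phi>_def inj_def)
    then have "asymp_eq (g \<circ> \<phi>) (f \<circ> \<phi>)"
      using asymp_eq_comp asymp_eq_sym assms(2) by blast
    moreover have "asymp_eq (f \<circ> \<phi>) f"
      using assms(3) r by (auto simp: kernel_def \<phi>_def comp_def)
    ultimately have "asymp_eq h f"
      unfolding h by (auto simp: \<phi>_def comp_def intro: asymp_eq_trans)
    then show "upper_density_zero {n. h n \<noteq> f n}"
      by (simp add: asymp_eq_iff)
  qed
  show "g (k ^ a * n + r) = f n" if "n \<notin> ?E" "r < k ^ a" for n a r
    using that unfolding kernel_def by blast
qed

section \<open>Runs of ones\<close>

lemma bit_imp_exp_le: "bit (x::nat) i \<Longrightarrow> 2 ^ i \<le> x"
  by (metis bit_take_bit_iff less_irrefl not_le take_bit_nat_eq_self)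

lemma bit_mult_exp_add:
  fixes q r :: nat
  assumes "r < 2 ^ p"
  shows "bit (2 ^ p * q + r) i \<longleftrightarrow> (if i < p then bit r i else bit q (i - p))"
proof (cases "i < p")
  case True
  have "take_bit p (2 ^ p * q + r) = r"
    using assms by (simp add: take_bit_eq_mod)
  then show ?thesis
    using True bit_take_bit_iff[of p "2 ^ p * q + r" i] by simp
next
  case False
  have "drop_bit p (2 ^ p * q + r) = q"
    using assms by (simp add: drop_bit_eq_div)
  then show ?thesis
    using False bit_drop_bit_eq[of p "2 ^ p * q + r"] by (simp add: fun_eq_iff)
qed

definition ones_run :: "nat \<Rightarrow> nat \<Rightarrow> nat \<Rightarrow> bool" where
  "ones_run x i l \<longleftrightarrow> (\<forall>j<l. bit x (i + j))"

lemma ones_run_length_le: "ones_run x i l \<Longrightarrow> l \<le> x"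
proof (cases l)
  case (Suc k)
  assume "ones_run x i l"
  then have "2 ^ (i + k) \<le> x"
    using Suc by (auto simp: ones_run_def intro: bit_imp_exp_le)
  moreover have "i + k < 2 ^ (i + k)"
    by (rule less_exp)
  ultimately show ?thesis
    using Suc by linarith
qed simp

lemma le_kappa_iff: "l \<le> kappa x \<longleftrightarrow> (\<exists>i. ones_run x i l)"
proof -
  let ?L = "{l. \<exists>i. ones_run x i l}"
  have fin: "finite ?L"
    by (rule finite_subset[of _ "{..x}"]) (auto dest: ones_run_length_le)
  have "ones_run x 0 0"
    by (simp add: ones_run_def)
  then have "kappa x \<in> ?L"
    unfolding kappa_def ones_run_def[symmetric] using fin by (intro Max_in) auto
  then obtain i where "ones_run x i (kappa x)"
    by blast
  then have "l \<le> kappa x \<Longrightarrow> \<exists>i. ones_run x i l"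
    unfolding ones_run_def by (meson order_less_le_trans)
  moreover have "ones_run x i l \<Longrightarrow> l \<le> kappa x" for i
    unfolding kappa_def ones_run_def[symmetric] using fin by (intro Max_ge) auto
  ultimately show ?thesis
    by blast
qed

lemma kappa_le_iff: "kappa x \<le> l \<longleftrightarrow> (\<forall>i. \<not> ones_run x i (Suc l))"
  using le_kappa_iff[of "Suc l" x] by auto

lemma kappa_take_bit_le: "kappa (take_bit p x) \<le> kappa x"
proof -
  obtain i where "ones_run (take_bit p x) i (kappa (take_bit p x))"
    using le_kappa_iff by blast
  then have "ones_run x i (kappa (take_bit p x))"
    by (simp add: ones_run_def bit_take_bit_iff)
  then show ?thesis
    using le_kappa_iff by blast
qed

lemma kappa_drop_bit_le: "kappa (drop_bit p x) \<le> kappa x"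
proof -
  obtain i where "ones_run (drop_bit p x) i (kappa (drop_bit p x))"
    using le_kappa_iff by blast
  then have "ones_run x (p + i) (kappa (drop_bit p x))"
    by (simp add: ones_run_def bit_drop_bit_eq add.assoc)
  then show ?thesis
    using le_kappa_iff by blast
qed

lemma kappa_le_of_less_exp:
  assumes "x < 2 ^ p"
  shows "kappa x \<le> p"
  unfolding kappa_le_iff
proof (intro allI notI)
  fix i assume "ones_run x i (Suc p)"
  then have "2 ^ (i + p) \<le> x"
    by (auto simp: ones_run_def intro: bit_imp_exp_le)
  moreover have "(2::nat) ^ p \<le> 2 ^ (i + p)"
    by simp
  ultimately show False
    using assms by linarith
qed

lemma kappa_split:
  assumes "\<not> bit x p"
  shows "kappa x = max (kappa (take_bit p x)) (kappa (drop_bit (Suc p) x))"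
proof (rule antisym)
  obtain i where run: "ones_run x i (kappa x)"
    using le_kappa_iff by blast
  consider "i + kappa x \<le> p" | "p < i" | "i \<le> p" "p < i + kappa x"
    by linarith
  then show "kappa x \<le> max (kappa (take_bit p x)) (kappa (drop_bit (Suc p) x))"
  proof cases
    case 1
    then have "ones_run (take_bit p x) i (kappa x)"
      using run by (simp add: ones_run_def bit_take_bit_iff)
    then show ?thesis
      by (meson le_kappa_iff max.coboundedI1 max.coboundedI2)
  next
    case 2
    then have "ones_run (drop_bit (Suc p) x) (i - Suc p) (kappa x)"
      using run by (simp add: ones_run_def bit_drop_bit_eq)
    then show ?thesis
      by (meson le_kappa_iff max.coboundedI1 max.coboundedI2)
  next
    case 3
    then have "bit x p"
      using run by (auto simp: ones_run_def dest: spec[of _ "p - i"])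
    with assms show ?thesis
      by contradiction
  qed
qed (simp add: kappa_take_bit_le kappa_drop_bit_le)

lemma kappa_mult_exp_add:
  fixes n r :: nat
  assumes "r < 2 ^ p"
  shows "kappa (2 ^ Suc p * n + r) = max (kappa n) (kappa r)"
proof -
  let ?m = "2 ^ Suc p * n + r"
  have r: "r < 2 ^ Suc p"
    using assms by simp
  have "\<not> bit r p"
    using assms bit_imp_exp_le not_le by blast
  then have "\<not> bit ?m p"
    using bit_mult_exp_add[OF r] by simp
  then have "kappa ?m = max (kappa (take_bit p ?m)) (kappa (drop_bit (Suc p) ?m))"
    by (rule kappa_split)
  moreover have "take_bit p ?m = r"
  proof -
    have "take_bit (Suc p) ?m = r"
      using r by (simp add: take_bit_eq_mod)
    then show ?thesis
      using take_bit_take_bit[of p "Suc p" ?m] assms by (simp add: take_bit_nat_eq_self)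
  qed
  moreover have "drop_bit (Suc p) ?m = n"
    using r by (simp add: drop_bit_eq_div)
  ultimately show ?thesis
    by (simp add: max.commute)
qed

lemma kappa_mult_exp_add_eq:
  fixes n r :: nat
  assumes "r < 2 ^ p" "\<not> bit n t" "p + t \<le> kappa n"
  shows "kappa (2 ^ p * n + r) = kappa n"
proof (rule antisym)
  let ?m = "2 ^ p * n + r"
  have drop: "drop_bit p ?m = n"
    using assms(1) by (simp add: drop_bit_eq_div)
  then show "kappa n \<le> kappa ?m"
    using kappa_drop_bit_le[of p ?m] by simp
  have "\<not> bit ?m (p + t)"
    using assms(2) bit_mult_exp_add[OF assms(1)] by simp
  then have "kappa ?m = max (kappa (take_bit (p + t) ?m)) (kappa (drop_bit (Suc (p + t)) ?m))"
    by (rule kappa_split)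
  moreover have "kappa (take_bit (p + t) ?m) \<le> p + t"
    by (rule kappa_le_of_less_exp) simp
  moreover have "drop_bit (Suc (p + t)) ?m = drop_bit (Suc t) n"
    using drop drop_bit_drop_bit[of "Suc t" p ?m] by (simp add: add.commute)
  ultimately show "kappa ?m \<le> kappa n"
    using assms(3) kappa_drop_bit_le[of "Suc t" n] by simp
qed

definition insert_bit :: "nat \<Rightarrow> nat \<Rightarrow> nat" where
  "insert_bit p n = 2 ^ p * (2 * drop_bit p n + 1) + take_bit p n"

lemma bit_insert_bit:
  "bit (insert_bit p n) i \<longleftrightarrow> (if i < p then bit n i else i = p \<or> bit n (i - 1))"
proof -
  have "bit (2 * drop_bit p n + 1) j \<longleftrightarrow> j = 0 \<or> bit n (p + j - 1)" for j
    by (cases j) (simp_all add: bit_0 bit_Suc bit_drop_bit_eq)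
  then show ?thesis
    unfolding insert_bit_def bit_mult_exp_add[OF take_bit_nat_less_exp]
    by (auto simp: bit_take_bit_iff)
qed

lemma insert_bit_le: "insert_bit p n \<le> 2 * n + 2 ^ p"
proof -
  have "n = 2 ^ p * drop_bit p n + take_bit p n"
    using bits_ident[of p n] by (simp add: push_bit_eq_mult mult.commute)
  moreover have "insert_bit p n + take_bit p n = 2 * (2 ^ p * drop_bit p n + take_bit p n) + 2 ^ p"
    unfolding insert_bit_def by (simp add: algebra_simps)
  ultimately show ?thesis
    by simp
qed

lemma ones_run_insert_bit:
  assumes "ones_run (insert_bit p n) i (Suc l)"
  shows "\<exists>i'. ones_run n i' l"
proof (cases "i \<le> p")
  case True
  have "bit n (i + j)" if "j < l" for j
  proof (cases "i + j < p")
    case True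
    then show ?thesis
      using assms that by (auto simp: ones_run_def bit_insert_bit)
  next
    case False
    then show ?thesis
      using assms that spec[of _ "Suc j"]
      by (auto simp: ones_run_def bit_insert_bit)
  qed
  then show ?thesis
    unfolding ones_run_def by blast
next
  case False
  then have "ones_run n (i - 1) l"
    using assms by (auto simp: ones_run_def bit_insert_bit)
  then show ?thesis ..
qed

lemma kappa_insert_bit_le: "kappa (insert_bit p n) \<le> Suc (kappa n)"
  unfolding kappa_le_iff
  using ones_run_insert_bit le_kappa_iff by (metis Suc_n_not_le_n)

definition first_run_start :: "nat \<Rightarrow> nat" where
  "first_run_start n = (LEAST i. ones_run n i (kappa n))"

definition extend_run :: "nat \<Rightarrow> nat" where
  "extend_run n = insert_bit (first_run_start n + kappa n) n"

lemma ones_run_first_run_start: "ones_run n (first_run_start n) (kappa n)"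
  unfolding first_run_start_def by (rule LeastI_ex) (use le_kappa_iff in blast)

lemma ones_run_extend_run: "ones_run (extend_run n) (first_run_start n) (Suc (kappa n))"
  using ones_run_first_run_start[of n]
  by (auto simp: ones_run_def extend_run_def bit_insert_bit less_Suc_eq)

lemma kappa_extend_run: "kappa (extend_run n) = Suc (kappa n)"
  using ones_run_extend_run kappa_insert_bit_le le_kappa_iff
  by (metis antisym extend_run_def)

lemma first_run_start_extend_run: "first_run_start (extend_run n) = first_run_start n"
  unfolding first_run_start_def[of "extend_run n"] kappa_extend_run
proof (rule Least_equality)
  show "ones_run (extend_run n) (first_run_start n) (Suc (kappa n))"
    by (rule ones_run_extend_run)
next
  fix i assume run: "ones_run (extend_run n) i (Suc (kappa n))"
  show "first_run_start n \<le> i"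
  proof (rule ccontr)
    assume "\<not> first_run_start n \<le> i"
    then have "ones_run n i (Suc (kappa n))"
      using run by (auto simp: ones_run_def extend_run_def bit_insert_bit)
    then show False
      using le_kappa_iff by (metis Suc_n_not_le_n)
  qed
qed

lemma inj_extend_run: "inj extend_run"
proof (rule injI)
  fix n n' assume eq: "extend_run n = extend_run n'"
  define p where "p = first_run_start n + kappa n"
  have "p = first_run_start n' + kappa n'"
    using arg_cong[OF eq, of kappa] arg_cong[OF eq, of first_run_start]
    by (simp add: p_def kappa_extend_run first_run_start_extend_run)
  then have "insert_bit p n = insert_bit p n'"
    using eq by (simp add: extend_run_def p_def)
  moreover have "bit (insert_bit p m) (if i < p then i else Suc i) \<longleftrightarrow> bit m i" for m i
    by (simp add: bit_insert_bit)
  ultimately have "bit n i \<longleftrightarrow> bit n' i" for i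
    by metis
  then show "n = n'"
    by (rule bit_eqI)
qed

lemma extend_run_less: "extend_run n < 5 * Suc n"
proof -
  define p where "p = first_run_start n + kappa n"
  have "2 ^ p \<le> 2 * n + 1"
  proof (cases "kappa n")
    case 0
    then have "first_run_start n = 0"
      unfolding first_run_start_def by (simp add: ones_run_def)
    then show ?thesis
      using 0 by (simp add: p_def)
  next
    case (Suc k)
    then have "bit n (first_run_start n + k)"
      using ones_run_first_run_start[of n] by (simp add: ones_run_def)
    then have "2 ^ (first_run_start n + k) \<le> n"
      by (rule bit_imp_exp_le)
    then show ?thesis
      using Suc by (simp add: p_def)
  qed
  then show ?thesis
    using insert_bit_le[of p n] by (simp add: extend_run_def p_def)
qed

lemma upper_density_zero_kappa_Suc:
  assumes "upper_density_zero {n. P (kappa n)}"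
  shows "upper_density_zero {n. P (Suc (kappa n))}"
  using upper_density_zero_vimage[OF inj_extend_run extend_run_less assms]
  by (simp add: vimage_def kappa_extend_run)

lemma not_upper_density_zero_kappa_odd_eq: "\<not> upper_density_zero {n. odd (kappa n) \<longleftrightarrow> b}"
proof
  assume "upper_density_zero {n. odd (kappa n) \<longleftrightarrow> b}"
  moreover from this have "upper_density_zero {n. odd (kappa n) \<longleftrightarrow> \<not> b}"
    using upper_density_zero_kappa_Suc[where P = "\<lambda>k. odd k \<longleftrightarrow> b"] by simp
  ultimately have "upper_density_zero ({n. odd (kappa n) \<longleftrightarrow> b} \<union> {n. odd (kappa n) \<longleftrightarrow> \<not> b})"
    by (rule upper_density_zero_Un)
  moreover have "{n. odd (kappa n) \<longleftrightarrow> b} \<union> {n. odd (kappa n) \<longleftrightarrow> \<not> b} = UNIV"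
    by auto
  ultimately show False
    using not_upper_density_zero_UNIV by simp
qed

section \<open>The parity of kappa\<close>

lemma card_kappa_less_le: "card {x. x < 2 ^ (K * q) \<and> kappa x < K} \<le> (2 ^ K - 1) ^ q"
proof (induction q)
  case 0
  have "{x. x < 2 ^ (K * 0) \<and> kappa x < K} \<subseteq> {0}"
    by auto
  then show ?case
    using card_mono[of "{0}"] by simp
next
  case (Suc q)
  let ?R = "\<lambda>q. {x. x < 2 ^ (K * q) \<and> kappa x < K}"
  let ?split = "\<lambda>x. (take_bit K x, drop_bit K x)"
  have "inj_on ?split (?R (Suc q))"
    by (rule inj_onI) (simp, metis bits_ident)
  moreover have "?split ` ?R (Suc q) \<subseteq> ({..<2 ^ K} - {mask K :: nat}) \<times> ?R q"
  proof clarify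
    fix x assume x: "x < 2 ^ (K * Suc q)" "kappa x < K"
    have "take_bit K x \<noteq> mask K"
    proof
      assume "take_bit K x = mask K"
      then have "ones_run x 0 K"
        using bit_take_bit_iff[of K x] by (auto simp: ones_run_def bit_mask_iff)
      then show False
        using x(2) le_kappa_iff by (metis not_le)
    qed
    moreover have "drop_bit K x < 2 ^ (K * q)"
      using x(1) by (simp add: drop_bit_eq_div div_less_iff_less_mult power_add mult.commute)
    moreover have "kappa (drop_bit K x) < K"
      using x(2) kappa_drop_bit_le order.strict_trans1 by blast
    ultimately show "take_bit K x \<in> {..<2 ^ K} - {mask K} \<and> drop_bit K x \<in> ?R q"
      by simp
  qed
  ultimately have "card (?R (Suc q)) \<le> card (({..<2 ^ K} - {mask K :: nat}) \<times> ?R q)"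
    by (intro card_inj_on_le) auto
  also have "\<dots> = (2 ^ K - 1) * card (?R q)"
    by (simp add: card_cartesian_product mask_eq_exp_minus_1)
  also have "\<dots> \<le> (2 ^ K - 1) * (2 ^ K - 1) ^ q"
    using Suc.IH by simp
  finally show ?case
    by simp
qed

lemma upper_density_zero_kappa_less: "upper_density_zero {n. kappa n < K}"
  unfolding upper_density_zero_iff
proof (intro allI impI)
  fix e :: real assume "e > 0"
  define x :: real where "x = (2 ^ K - 1) / 2 ^ K"
  obtain q where q: "x ^ q < e"
    using real_arch_pow_inv[OF \<open>e > 0\<close>, of x] by (auto simp: x_def)
  let ?R = "{x. x < 2 ^ (K * q) \<and> kappa x < K}"
  show "eventually_density_less {n. kappa n < K} e"
  proof (rule eventually_density_less_periodic)
    show "{n. kappa n < K} \<subseteq> {n. n mod 2 ^ (K * q) \<in> ?R}"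
      using kappa_take_bit_le order.strict_trans1 by (fastforce simp flip: take_bit_eq_mod)
    have "real (card ?R) \<le> real ((2 ^ K - 1) ^ q)"
      using card_kappa_less_le of_nat_le_iff by blast
    also have "\<dots> = (2 ^ K - 1) ^ q"
      by (simp add: of_nat_diff)
    finally have "real (card ?R) \<le> (2 ^ K - 1) ^ q" .
    then have "real (card ?R) / real (2 ^ (K * q)) \<le> x ^ q"
      by (simp add: x_def power_divide power_mult divide_right_mono)
    then show "real (card ?R) / real (2 ^ (K * q)) < e"
      using q by linarith
  qed simp_all
qed

lemma asymp_eq_kappa_parity_mult_exp_add:
  assumes "r < 2 ^ p"
  shows "asymp_eq (\<lambda>n. kappa_parity (2 ^ p * n + r)) kappa_parity"
  unfolding asymp_eq_iff upper_density_zero_iff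
proof (intro allI impI)
  fix e :: real assume "e > 0"
  obtain t where t: "(1 / 2) ^ t < e / 2"
    using real_arch_pow_inv[of "e / 2" "1 / 2"] \<open>e > 0\<close> by auto
  let ?T = "{n. take_bit t n = mask t}" and ?L = "{n. kappa n < p + t}"
  have sub: "{n. kappa_parity (2 ^ p * n + r) \<noteq> kappa_parity n} \<subseteq> ?T \<union> ?L"
  proof (rule subsetI, rule ccontr)
    fix n assume n: "n \<in> {n. kappa_parity (2 ^ p * n + r) \<noteq> kappa_parity n}" "n \<notin> ?T \<union> ?L"
    have "\<exists>j<t. \<not> bit n j"
    proof (rule ccontr)
      assume "\<not> (\<exists>j<t. \<not> bit n j)"
      then have "take_bit t n = mask t"
        by (intro bit_eqI) (auto simp: bit_take_bit_iff bit_mask_iff)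
      with n(2) show False
        by simp
    qed
    then obtain j where "j < t" "\<not> bit n j"
      by blast
    then have "kappa (2 ^ p * n + r) = kappa n"
      using n(2) by (intro kappa_mult_exp_add_eq[OF assms]) auto
    with n(1) show False
      by (simp add: kappa_parity_def)
  qed
  have "eventually_density_less ?T (e / 2)"
    by (rule eventually_density_less_periodic[where P = "2 ^ t" and R = "{mask t}"])
      (use t in \<open>auto simp: take_bit_eq_mod power_divide\<close>)
  moreover have "eventually_density_less ?L (e / 2)"
    using upper_density_zero_kappa_less \<open>e > 0\<close> by (simp add: upper_density_zero_iff)
  ultimately have "eventually_density_less (?T \<union> ?L) (e / 2 + e / 2)"
    by (rule eventually_density_less_Un)
  then show "eventually_density_less {n. kappa_parity (2 ^ p * n + r) \<noteq> kappa_parity n} e"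
    using sub by (simp add: eventually_density_less_subset)
qed

lemma kernel_kappa_parity_asymp_eq: "h \<in> kernel 2 kappa_parity \<Longrightarrow> asymp_eq h kappa_parity"
  unfolding kernel_def using asymp_eq_kappa_parity_mult_exp_add by auto

lemma mult_exp_add_mask_less:
  fixes s :: nat
  assumes "s < 2 ^ b"
  shows "2 ^ K * s + mask K < 2 ^ (b + K)"
proof -
  have "2 ^ K * s + mask K < 2 ^ K * Suc s"
    using zero_less_power[of "2::nat" K] by (simp add: mask_eq_exp_minus_1 algebra_simps)
  also have "\<dots> \<le> 2 ^ K * 2 ^ b"
    using assms by (intro mult_le_mono2 Suc_leI)
  finally show ?thesis
    by (simp add: power_add mult.commute)
qed

lemma le_kappa_mult_exp_add_mask: "K \<le> kappa (2 ^ K * s + mask K)" for s :: nat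
proof -
  have "ones_run (2 ^ K * s + mask K) 0 K"
    by (simp add: ones_run_def bit_mult_exp_add bit_mask_iff)
  then show ?thesis
    using le_kappa_iff by blast
qed

lemma kappa_parity_disagrees_often:
  fixes g :: "nat \<Rightarrow> nat"
  assumes agree: "\<And>a r n. n \<in> {n0, n1} \<Longrightarrow> r < 2 ^ a \<Longrightarrow> g (2 ^ a * n + r) = kappa_parity n"
    and differ: "kappa_parity n0 \<noteq> kappa_parity n1"
  shows "2 ^ b \<le> card ({n. kappa_parity n \<noteq> g n} \<inter>
                        {..<2 ^ Suc (max (kappa n0) (kappa n1)) * (n0 + n1 + 1) * 2 ^ b})"
    (is "_ \<le> card (?E \<inter> {..<?M})")
proof -
  define K where "K = max (kappa n0) (kappa n1)"
  define m :: "nat \<Rightarrow> nat \<Rightarrow> nat"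
    where "m n s = 2 ^ Suc (b + K) * n + (2 ^ K * s + mask K)" for n s
  have "{..<2 ^ b} \<subseteq> (\<lambda>x. drop_bit K (take_bit (Suc (b + K)) x)) ` (?E \<inter> {..<?M})"
  proof
    fix s :: nat assume "s \<in> {..<2 ^ b}"
    then have suffix: "2 ^ K * s + mask K < 2 ^ (b + K)"
      by (simp add: mult_exp_add_mask_less)
    then have "2 ^ K * s + mask K < 2 ^ Suc (b + K)"
      by simp
    then have "g (m n s) = kappa_parity n" if "n \<in> {n0, n1}" for n
      unfolding m_def using agree[OF that] by blast
    \<comment> \<open>the suffix's K trailing ones dominate, so kappa_parity cannot tell m n0 s from m n1 s\<close>
    moreover have "kappa (m n s) = kappa (2 ^ K * s + mask K)" if "n \<in> {n0, n1}" for n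
      using that kappa_mult_exp_add[OF suffix] le_kappa_mult_exp_add_mask[of K s]
      by (auto simp: m_def K_def)
    then have "kappa_parity (m n0 s) = kappa_parity (m n1 s)"
      by (simp add: kappa_parity_def)
    ultimately have "m n0 s \<in> ?E \<or> m n1 s \<in> ?E"
      using differ by auto
    then obtain n where n: "n \<in> {n0, n1}" "m n s \<in> ?E"
      by blast
    have "m n s < 2 ^ Suc (b + K) * Suc n"
      using suffix by (simp add: m_def)
    also have "\<dots> \<le> 2 ^ Suc (b + K) * (n0 + n1 + 1)"
      using n(1) by (intro mult_le_mono2) auto
    also have "\<dots> = ?M"
      unfolding K_def by (simp only: power_Suc power_add mult_ac)
    finally have "m n s \<in> ?E \<inter> {..<?M}"
      using n(2) by simp
    moreover have "take_bit (Suc (b + K)) (m n s) = 2 ^ K * s + mask K"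
      using suffix by (simp add: m_def take_bit_eq_mod)
    then have "s = drop_bit K (take_bit (Suc (b + K)) (m n s))"
      by (simp add: drop_bit_eq_div)
    ultimately show "s \<in> (\<lambda>x. drop_bit K (take_bit (Suc (b + K)) x)) ` (?E \<inter> {..<?M})"
      by (rule rev_image_eqI)
  qed
  then show ?thesis
    using surj_card_le[of "?E \<inter> {..<?M}" "{..<2 ^ b :: nat}"] by simp
qed

lemma ex_kappa_odd_eq_notin:
  assumes "upper_density_zero E"
  shows "\<exists>n. n \<notin> E \<and> (odd (kappa n) \<longleftrightarrow> b)"
proof (rule ccontr)
  assume "\<nexists>n. n \<notin> E \<and> (odd (kappa n) \<longleftrightarrow> b)"
  then have "{n. odd (kappa n) \<longleftrightarrow> b} \<subseteq> E"
    by blast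
  with assms show False
    using not_upper_density_zero_kappa_odd_eq upper_density_zero_subset by blast
qed

theorem proposition3p2:
  shows "asymp_automatic 2 kappa_parity \<and>
         \<not> (\<exists>g :: nat \<Rightarrow> nat. (\<forall>n. g n \<in> {0, 1}) \<and> automatic 2 g \<and> asymp_eq kappa_parity g)"
proof (intro conjI notI)
  show "asymp_automatic 2 kappa_parity"
    using kernel_kappa_parity_asymp_eq by (rule asymp_automatic_if_kernel_asymp_eq)
next
  assume "\<exists>g :: nat \<Rightarrow> nat. (\<forall>n. g n \<in> {0, 1}) \<and> automatic 2 g \<and> asymp_eq kappa_parity g"
  then obtain g :: "nat \<Rightarrow> nat" where aut: "automatic 2 g" and g: "asymp_eq kappa_parity g"
    by blast
  obtain E where E: "upper_density_zero E"
    and agree: "\<And>n a r. n \<notin> E \<Longrightarrow> r < 2 ^ a \<Longrightarrow> g (2 ^ a * n + r) = kappa_parity n"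
    using automatic_agrees_outside_sparse_set[OF aut g kernel_kappa_parity_asymp_eq] by blast
  obtain n0 n1 where n0: "n0 \<notin> E" "even (kappa n0)" and n1: "n1 \<notin> E" "odd (kappa n1)"
    using ex_kappa_odd_eq_notin[OF E, of False] ex_kappa_odd_eq_notin[OF E, of True] by auto
  define c where "c = 2 ^ Suc (max (kappa n0) (kappa n1)) * (n0 + n1 + 1)"
  have "2 ^ b \<le> card ({n. kappa_parity n \<noteq> g n} \<inter> {..<c * 2 ^ b})" for b
    unfolding c_def using n0 n1 agree
    by (intro kappa_parity_disagrees_often) (auto simp: kappa_parity_def)
  then have "\<exists>n\<ge>m. n \<le> card ({n. kappa_parity n \<noteq> g n} \<inter> {..<c * n})" for m
    using less_exp[of m] by (intro exI[of _ "2 ^ m"]) simp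
  then have "\<not> upper_density_zero {n. kappa_parity n \<noteq> g n}"
    by (rule not_upper_density_zero_if_frequently_dense)
  with g show False
    by (simp add: asymp_eq_iff)
qed

end
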